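(* Assume there exists a cardinal $\vartheta$ with $\mathbf V_\vartheta\models\mathsf{ZFC}$; let $\vartheta$ be the least such and $V=\mathbf V_\vartheta$. Let $I$, $U$, ${}^\ast V$, ${}^\ast\!\in$, ${}^\ast\!=$, $r(\cdot)$ and $\Phi[\mathbf i]$ be as described in the context. Let $\Phi$ be an internal formula (built from $\in$ and $=$) with parameters in ${}^\ast V$, and let $r\ge r(\Phi)$. Then $\Phi$ is true in $\langle{}^\ast V;{}^\ast\!\in,{}^\ast\!=\rangle$ if and only if $\mathbf U i_r\,\mathbf U i_{r-1}\cdots\mathbf U i_1\,\big(\Phi[i_1,\dots,i_r]\text{ is true in }(V,\in)\big)$.
   Context: $I=\{i\in V: i\text{ finite}\}$. $\mathrm{Def}(V)$ is the collection of subsets of $V$ first-order definable in $(V,\in)$ with parameters from $V$. $U$ is an ultrafilter over $I$ such that (A) $\{i\in I:a\in i\}\in U$ for every $a\in V$, and (B) for every $P\subseteq I\times V$ in $\mathrm{Def}(V)$, $\{x\in V:\{i:\langle i,x\rangle\in P\}\in U\}\in\mathrm{Def}(V)$. Write $\mathbf U i\,\varphi(i)$ for $\{i\in I:\varphi(i)\}\in U$. For $r\in\omega$ let ${}^\ast V_r$ be the set of all functions $f:I^r\to V$ (with $I^0=\{\emptyset\}$), and ${}^\ast V=\bigcup_{r\in\omega}{}^\ast V_r$; for $z\in V$ put ${}^\ast z=\{\langle\emptyset,z\rangle\}\in{}^\ast V_0$. For $F\in{}^\ast V$, $r(F)$ is the unique $r$ with $F\in{}^\ast V_r$; for $q\ge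 r(F)$ and $\mathbf i=\langle i_1,\dots,i_q\rangle\in I^q$ put $F[\mathbf i]=F(i_1,\dots,i_{r(F)})$ (so ${}^\ast z[\mathbf i]=z$). For $F,G\in{}^\ast V$ with $r=\max\{r(F),r(G)\}$: $F\,{}^\ast\!\!\in G$ iff $\mathbf U i_r\cdots\mathbf U i_1\,(F[\mathbf i]\in G[\mathbf i])$, and $F\,{}^\ast\!\!=G$ iff $\mathbf U i_r\cdots\mathbf U i_1\,(F[\mathbf i]=G[\mathbf i])$, where $\mathbf i=\langle i_1,\dots,i_r\rangle$. For a formula $\Phi$ with parameters in ${}^\ast V$, $r(\Phi)=\max\{r(F):F\text{ occurs in }\Phi\}$, and for $r\ge r(\Phi)$, $\mathbf i\in I^r$, $\Phi[\mathbf i]$ is obtained by replacing each parameter $F$ by $F[\mathbf i]$ (a formula with parameters in $V$). *)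

theory Defs
  imports Main
begin

datatype 'p tm = Var nat | Par 'p

datatype 'p fm =
    Mem "'p tm" "'p tm"
  | Eq "'p tm" "'p tm"
  | Neg "'p fm"
  | Conj "'p fm" "'p fm"
  | Ex nat "'p fm"

fun tval :: "(nat \<Rightarrow> 'd) \<Rightarrow> 'd tm \<Rightarrow> 'd" where
  "tval e (Var n) = e n"
| "tval e (Par p) = p"

fun sat :: "'d set \<Rightarrow> ('d \<Rightarrow> 'd \<Rightarrow> bool) \<Rightarrow> ('d \<Rightarrow> 'd \<Rightarrow> bool)
             \<Rightarrow> (nat \<Rightarrow> 'd) \<Rightarrow> 'd fm \<Rightarrow> bool" where
  "sat D m q e (Mem s t) = m (tval e s) (tval e t)"
| "sat D m q e (Eq s t) = q (tval e s) (tval e t)"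
| "sat D m q e (Neg \<phi>) = (\<not> sat D m q e \<phi>)"
| "sat D m q e (Conj \<phi> \<psi>) = (sat D m q e \<phi> \<and> sat D m q e \<psi>)"
| "sat D m q e (Ex n \<phi>) = (\<exists>x\<in>D. sat D m q (e(n := x)) \<phi>)"

fun fv_tm :: "'p tm \<Rightarrow> nat set" where
  "fv_tm (Var n) = {n}"
| "fv_tm (Par p) = {}"

fun fv :: "'p fm \<Rightarrow> nat set" where
  "fv (Mem s t) = fv_tm s \<union> fv_tm t"
| "fv (Eq s t) = fv_tm s \<union> fv_tm t"
| "fv (Neg \<phi>) = fv \<phi>"
| "fv (Conj \<phi> \<psi>) = fv \<phi> \<union> fv \<psi>"
| "fv (Ex n \<phi>) = fv \<phi> - {n}"

text \<open>I = set of elements of V that are finite (finiteness is absolute for V_theta).\<close>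
definition finV :: "('v \<Rightarrow> 'v \<Rightarrow> bool) \<Rightarrow> 'v set" where
  "finV mem = {i. finite {a. mem a i}}"

definition Defbl :: "('v \<Rightarrow> 'v \<Rightarrow> bool) \<Rightarrow> 'v set \<Rightarrow> bool" where
  "Defbl mem X \<longleftrightarrow> (\<exists>(\<phi>::'v fm) e n. X = {x. sat UNIV mem (=) (e(n := x)) \<phi>})"

definition is_pair :: "('v \<Rightarrow> 'v \<Rightarrow> bool) \<Rightarrow> 'v \<Rightarrow> 'v \<Rightarrow> 'v \<Rightarrow> bool" where
  "is_pair mem z a b \<longleftrightarrow>
     (\<forall>w. mem w z \<longleftrightarrow> ((\<forall>u. mem u w \<longleftrightarrow> u = a) \<or> (\<forall>u. mem u w \<longleftrightarrow> u = a \<or> u = b)))"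

definition ultrafilter_on :: "'a set \<Rightarrow> 'a set set \<Rightarrow> bool" where
  "ultrafilter_on I U \<longleftrightarrow>
     U \<subseteq> Pow I \<and> I \<in> U \<and> {} \<notin> U \<and>
     (\<forall>A B. A \<in> U \<and> B \<in> U \<longrightarrow> A \<inter> B \<in> U) \<and>
     (\<forall>A B. A \<in> U \<and> A \<subseteq> B \<and> B \<subseteq> I \<longrightarrow> B \<in> U) \<and>
     (\<forall>A. A \<subseteq> I \<longrightarrow> A \<in> U \<or> I - A \<in> U)"

text \<open>Uq I U r P  means  U i_r U i_(r-1) ... U i_1 P [i_1,...,i_r]
  (outermost quantifier over the last coordinate).\<close>
fun Uq :: "'a set \<Rightarrow> 'a set set \<Rightarrow> nat \<Rightarrow> ('a list \<Rightarrow> bool) \<Rightarrow> bool" where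
  "Uq I U 0 P = P []"
| "Uq I U (Suc n) P = ({j \<in> I. Uq I U n (\<lambda>is. P (is @ [j]))} \<in> U)"

text \<open>An element F of *V_r (a function I^r \<rightarrow> V) is represented as (r, f) where
  f is defined on lists of length r with entries in I and is undefined elsewhere.\<close>
type_synonym 'v star = "nat \<times> ('v list \<Rightarrow> 'v)"

definition starV :: "'v set \<Rightarrow> 'v star set" where
  "starV I = {(r, f). \<forall>is. \<not> (length is = r \<and> set is \<subseteq> I) \<longrightarrow> f is = undefined}"

definition star_const :: "'v \<Rightarrow> 'v star" where
  "star_const z = (0, \<lambda>is. if is = [] then z else undefined)"

definition app :: "'v star \<Rightarrow> 'v list \<Rightarrow> 'v" where
  "app F is = snd F (take (fst F) is)"

definition starmem :: "('v \<Rightarrow> 'v \<Rightarrow> bool) \<Rightarrow> 'v set \<Rightarrow> 'v set set \<Rightarrow> 'v star \<Rightarrow> 'v star \<Rightarrow> bool" where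
  "starmem mem I U F G = Uq I U (max (fst F) (fst G)) (\<lambda>is. mem (app F is) (app G is))"

definition stareq :: "'v set \<Rightarrow> 'v set set \<Rightarrow> 'v star \<Rightarrow> 'v star \<Rightarrow> bool" where
  "stareq I U F G = Uq I U (max (fst F) (fst G)) (\<lambda>is. app F is = app G is)"

definition rk :: "'v star fm \<Rightarrow> nat" where
  "rk \<Phi> = Max (insert 0 (fst ` set_fm \<Phi>))"

definition inst :: "'v star fm \<Rightarrow> 'v list \<Rightarrow> 'v fm" where
  "inst \<Phi> is = map_fm (\<lambda>F. app F is) \<Phi>"

end

theory Submission
  imports Defs
begin

text \<open>This is Los's theorem for the iterated ultrapower, proved by induction on
  formulas with an arbitrary environment. Negation and conjunction commute with the iterated
  quantifier because each of its layers is an ultrafilter. For \<open>\<exists>\<close>, pointwise witnesses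
  are glued by choice into one element of \<open>*V\<close>; conversely a witness of rank larger than
  \<open>r\<close> is harmless, because a predicate of the first \<open>r\<close> coordinates has the same iterated
  \<open>U\<close>-value for every number \<open>r' \<ge> r\<close> of quantified coordinates.\<close>

lemma app_take: "fst F \<le> r \<Longrightarrow> app F (take r is) = app F is"
  by (simp add: app_def min_absorb1)

lemma inst_take:
  assumes "\<And>F. F \<in> set_fm \<phi> \<Longrightarrow> fst F \<le> r"
  shows "inst \<phi> (take r is) = inst \<phi> is"
  unfolding inst_def using assms by (intro fm.map_cong0) (simp add: app_take)

lemma tval_inst: "tval (\<lambda>m. app (e m) is) (map_tm (\<lambda>F. app F is) s) = app (tval e s) is"
  by (cases s) simp_all

lemma fv_map_fm: "fv (map_fm f \<phi>) = fv \<phi>"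
proof -
  have "fv_tm (map_tm f t) = fv_tm t" for t
    by (cases t) simp_all
  then show ?thesis
    by (induction \<phi>) simp_all
qed

lemma tval_cong_fv: "(\<And>n. n \<in> fv_tm t \<Longrightarrow> e n = e' n) \<Longrightarrow> tval e t = tval e' t"
  by (cases t) simp_all

lemma sat_cong_fv:
  "(\<And>n. n \<in> fv \<phi> \<Longrightarrow> e n = e' n) \<Longrightarrow> sat D m q e \<phi> = sat D m q e' \<phi>"
proof (induction \<phi> arbitrary: e e')
  case (Mem s t)
  then have "tval e s = tval e' s" "tval e t = tval e' t"
    by (auto intro: tval_cong_fv)
  then show ?case
    by simp
next
  case (Eq s t)
  then have "tval e s = tval e' s" "tval e t = tval e' t"
    by (auto intro: tval_cong_fv)
  then show ?case
    by simp
next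
  case (Neg \<phi>)
  have "sat D m q e \<phi> = sat D m q e' \<phi>"
    by (rule Neg.IH) (use Neg.prems in simp)
  then show ?case
    by simp
next
  case (Conj \<phi> \<psi>)
  have "sat D m q e \<phi> = sat D m q e' \<phi>" "sat D m q e \<psi> = sat D m q e' \<psi>"
    by (rule Conj.IH(1), use Conj.prems in simp) (rule Conj.IH(2), use Conj.prems in simp)
  then show ?case
    by simp
next
  case (Ex n \<phi>)
  have "sat D m q (e(n := x)) \<phi> = sat D m q (e'(n := x)) \<phi>" for x
    by (rule Ex.IH) (use Ex.prems in auto)
  then show ?case
    by simp
qed

lemma fst_le_rk: "F \<in> set_fm \<Phi> \<Longrightarrow> fst F \<le> rk \<Phi>"
proof -
  have "finite (set_tm t)" for t :: "'a tm"
    by (cases t) simp_all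
  then have "finite (set_fm \<Phi>)"
    by (induction \<Phi>) simp_all
  then show "F \<in> set_fm \<Phi> \<Longrightarrow> fst F \<le> rk \<Phi>"
    unfolding rk_def by (intro Max_ge) simp_all
qed

lemma fst_tval_le:
  "(\<And>F. F \<in> set_tm t \<Longrightarrow> fst F \<le> r) \<Longrightarrow> (\<And>m. fst (e m) \<le> r) \<Longrightarrow> fst (tval e t) \<le> r"
  by (cases t) simp_all

lemma Uq_add: "Uq I U (a + b) P = Uq I U b (\<lambda>js. Uq I U a (\<lambda>is. P (is @ js)))"
  by (induction b arbitrary: P) simp_all

context
  fixes I :: "'a set" and U :: "'a set set"
  assumes ultra: "ultrafilter_on I U"
begin

lemma ultrafilter_upward_closed: "A \<in> U \<Longrightarrow> A \<subseteq> B \<Longrightarrow> B \<subseteq> I \<Longrightarrow> B \<in> U"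
  using ultra unfolding ultrafilter_on_def by blast

lemma ultrafilter_Int_iff:
  assumes "A \<subseteq> I" and "B \<subseteq> I"
  shows "A \<inter> B \<in> U \<longleftrightarrow> A \<in> U \<and> B \<in> U"
proof -
  have "A \<inter> B \<in> U" if "A \<in> U" "B \<in> U"
    using ultra that unfolding ultrafilter_on_def by blast
  then show ?thesis
    using assms ultrafilter_upward_closed[of "A \<inter> B"] by blast
qed

lemma ultrafilter_Diff_iff:
  assumes "A \<subseteq> I"
  shows "I - A \<in> U \<longleftrightarrow> A \<notin> U"
proof -
  have "A \<inter> (I - A) = {}"
    by blast
  then show ?thesis
    using ultra assms unfolding ultrafilter_on_def by metis
qed

lemma Uq_mono:
  assumes "\<And>is. length is = n \<Longrightarrow> set is \<subseteq> I \<Longrightarrow> P is \<Longrightarrow> Q is"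
    and "Uq I U n P"
  shows "Uq I U n Q"
  using assms
proof (induction n arbitrary: P Q)
  case (Suc n)
  have "Uq I U n (\<lambda>is. Q (is @ [j]))" if "j \<in> I" "Uq I U n (\<lambda>is. P (is @ [j]))" for j
  proof (rule Suc.IH[OF _ that(2)])
    fix "is" :: "'a list"
    assume "length is = n" "set is \<subseteq> I" "P (is @ [j])"
    with \<open>j \<in> I\<close> show "Q (is @ [j])"
      by (intro Suc.prems(1)) simp_all
  qed
  then have "{j \<in> I. Uq I U n (\<lambda>is. P (is @ [j]))} \<subseteq> {j \<in> I. Uq I U n (\<lambda>is. Q (is @ [j]))}"
    by blast
  from ultrafilter_upward_closed[OF Suc.prems(2)[unfolded Uq.simps] this] show ?case
    by simp
qed simp

lemma Uq_cong:
  "(\<And>is. length is = n \<Longrightarrow> set is \<subseteq> I \<Longrightarrow> P is = Q is) \<Longrightarrow> Uq I U n P = Uq I U n Q"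
  by (metis Uq_mono)

lemma Uq_Not: "Uq I U n (\<lambda>is. \<not> P is) \<longleftrightarrow> \<not> Uq I U n P"
proof (induction n arbitrary: P)
  case (Suc n)
  have "{j \<in> I. Uq I U n (\<lambda>is. \<not> P (is @ [j]))} = I - {j \<in> I. Uq I U n (\<lambda>is. P (is @ [j]))}"
    using Suc.IH by auto
  then show ?case
    by (simp add: ultrafilter_Diff_iff)
qed simp

lemma Uq_conj: "Uq I U n (\<lambda>is. P is \<and> Q is) \<longleftrightarrow> Uq I U n P \<and> Uq I U n Q"
proof (induction n arbitrary: P Q)
  case (Suc n)
  have "{j \<in> I. Uq I U n (\<lambda>is. P (is @ [j]) \<and> Q (is @ [j]))} =
      {j \<in> I. Uq I U n (\<lambda>is. P (is @ [j]))} \<inter> {j \<in> I. Uq I U n (\<lambda>is. Q (is @ [j]))}"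
    using Suc.IH by auto
  then show ?case
    by (simp add: ultrafilter_Int_iff)
qed simp

lemma Uq_const: "Uq I U n (\<lambda>_. c) \<longleftrightarrow> c"
  using ultra unfolding ultrafilter_on_def by (induction n) (auto simp: Collect_conj_eq)

lemma Uq_take_invariant:
  assumes "\<And>is. Q (take r is) = Q is" and "r \<le> r'"
  shows "Uq I U r' Q = Uq I U r Q"
proof -
  have "Uq I U r' Q = Uq I U (r' - r) (\<lambda>js. Uq I U r (\<lambda>is. Q (is @ js)))"
    using Uq_add[of I U r "r' - r" Q] \<open>r \<le> r'\<close> by simp
  also have "\<dots> = Uq I U (r' - r) (\<lambda>_. Uq I U r Q)"
  proof -
    have "Uq I U r (\<lambda>is. Q (is @ js)) = Uq I U r Q" for js
      by (intro Uq_cong) (metis assms(1) append_eq_conv_conj)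
    then show ?thesis
      by simp
  qed
  also have "\<dots> = Uq I U r Q"
    by (rule Uq_const)
  finally show ?thesis .
qed

lemma Uq_choice:
  assumes "Uq I U r (\<lambda>is. \<exists>x. P is x)"
  obtains F where "F \<in> starV I" and "fst F = r" and "Uq I U r (\<lambda>is. P is (app F is))"
proof
  let ?F = "(r, \<lambda>is. if length is = r \<and> set is \<subseteq> I then SOME x. P is x else undefined)"
  show "?F \<in> starV I" "fst ?F = r"
    by (simp_all add: starV_def)
  show "Uq I U r (\<lambda>is. P is (app ?F is))"
    using assms by (rule Uq_mono[rotated]) (simp add: app_def, rule someI_ex)
qed

lemma Uq_ex_star_iff:
  assumes "\<And>is x. P (take r is) x = P is x"
  shows "(\<exists>F\<in>starV I. Uq I U (max r (fst F)) (\<lambda>is. P is (app F is))) \<longleftrightarrow>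
    Uq I U r (\<lambda>is. \<exists>x. P is x)"
proof
  assume "\<exists>F\<in>starV I. Uq I U (max r (fst F)) (\<lambda>is. P is (app F is))"
  then obtain F where "Uq I U (max r (fst F)) (\<lambda>is. P is (app F is))"
    by blast
  then have "Uq I U (max r (fst F)) (\<lambda>is. \<exists>x. P is x)"
    by (rule Uq_mono[rotated]) blast
  moreover have "(\<exists>x. P (take r is) x) \<longleftrightarrow> (\<exists>x. P is x)" for "is"
    using assms by simp
  ultimately show "Uq I U r (\<lambda>is. \<exists>x. P is x)"
    by (subst (asm) Uq_take_invariant) simp_all
next
  assume "Uq I U r (\<lambda>is. \<exists>x. P is x)"
  then obtain F where "F \<in> starV I" "fst F = r" "Uq I U r (\<lambda>is. P is (app F is))"
    by (rule Uq_choice)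
  then show "\<exists>F\<in>starV I. Uq I U (max r (fst F)) (\<lambda>is. P is (app F is))"
    by (metis max.idem)
qed

lemma Uq_rel_app_max:
  assumes "fst F \<le> r" and "fst G \<le> r"
  shows "Uq I U (max (fst F) (fst G)) (\<lambda>is. R (app F is) (app G is)) =
    Uq I U r (\<lambda>is. R (app F is) (app G is))"
  using assms by (intro Uq_take_invariant[symmetric]) (simp_all add: app_take)

theorem los:
  assumes "\<And>F. F \<in> set_fm \<phi> \<Longrightarrow> fst F \<le> r" and "\<And>m. fst (e m) \<le> r"
  shows "sat (starV I) (starmem mem I U) (stareq I U) e \<phi> \<longleftrightarrow>
    Uq I U r (\<lambda>is. sat UNIV mem (=) (\<lambda>m. app (e m) is) (inst \<phi> is))"
  using assms
proof (induction \<phi> arbitrary: e r)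
  case (Mem s t)
  have "fst (tval e s) \<le> r" "fst (tval e t) \<le> r"
    using Mem.prems by (simp_all add: fst_tval_le)
  then show ?case
    unfolding starmem_def by (simp add: inst_def tval_inst Uq_rel_app_max)
next
  case (Eq s t)
  have "fst (tval e s) \<le> r" "fst (tval e t) \<le> r"
    using Eq.prems by (simp_all add: fst_tval_le)
  then show ?case
    unfolding stareq_def by (simp add: inst_def tval_inst Uq_rel_app_max)
next
  case (Neg \<phi>)
  have "sat (starV I) (starmem mem I U) (stareq I U) e \<phi> \<longleftrightarrow>
      Uq I U r (\<lambda>is. sat UNIV mem (=) (\<lambda>m. app (e m) is) (inst \<phi> is))"
    using Neg.prems by (rule Neg.IH) simp_all
  then show ?case
    by (simp add: inst_def Uq_Not)
next
  case (Conj \<phi> \<psi>)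
  have "sat (starV I) (starmem mem I U) (stareq I U) e \<phi> \<longleftrightarrow>
        Uq I U r (\<lambda>is. sat UNIV mem (=) (\<lambda>m. app (e m) is) (inst \<phi> is))"
      "sat (starV I) (starmem mem I U) (stareq I U) e \<psi> \<longleftrightarrow>
        Uq I U r (\<lambda>is. sat UNIV mem (=) (\<lambda>m. app (e m) is) (inst \<psi> is))"
    using Conj.prems by (rule Conj.IH(1), simp_all) (rule Conj.IH(2), simp_all)
  then show ?case
    by (simp add: inst_def Uq_conj)
next
  case (Ex n \<psi>)
  let ?P = "\<lambda>is x. sat UNIV mem (=) ((\<lambda>m. app (e m) is)(n := x)) (inst \<psi> is)"
  have IH: "sat (starV I) (starmem mem I U) (stareq I U) (e(n := F)) \<psi> \<longleftrightarrow>
      Uq I U (max r (fst F)) (\<lambda>is. ?P is (app F is))" for F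
  proof -
    have "(\<lambda>m. app ((e(n := F)) m) is) = (\<lambda>m. app (e m) is)(n := app F is)" for "is"
      by auto
    moreover have "sat (starV I) (starmem mem I U) (stareq I U) (e(n := F)) \<psi> \<longleftrightarrow>
        Uq I U (max r (fst F))
          (\<lambda>is. sat UNIV mem (=) (\<lambda>m. app ((e(n := F)) m) is) (inst \<psi> is))"
      using Ex.prems by (intro Ex.IH) (force, simp add: le_max_iff_disj)
    ultimately show ?thesis
      by simp
  qed
  have "?P (take r is) x = ?P is x" for "is" x
    using Ex.prems by (simp add: app_take inst_take)
  then have "(\<exists>F\<in>starV I. Uq I U (max r (fst F)) (\<lambda>is. ?P is (app F is))) \<longleftrightarrow>
      Uq I U r (\<lambda>is. \<exists>x. ?P is x)"
    by (rule Uq_ex_star_iff)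
  with IH show ?case
    by (simp add: inst_def)
qed

end

theorem lemma6:
  fixes mem :: "'v \<Rightarrow> 'v \<Rightarrow> bool"
    and U :: "'v set set"
    and \<Phi> :: "'v star fm"
    and r :: nat
  assumes extensional: "\<And>a b. (\<forall>x. mem x a \<longleftrightarrow> mem x b) \<Longrightarrow> a = b"
    and wellfounded: "wf {(a, b). mem a b}"
    and ultra: "ultrafilter_on (finV mem) U"
    and condA: "\<And>a. {i \<in> finV mem. mem a i} \<in> U"
    and condB: "\<And>P. Defbl mem P \<Longrightarrow> (\<forall>z\<in>P. \<exists>i\<in>finV mem. \<exists>x. is_pair mem z i x) \<Longrightarrow>
                  Defbl mem {x. {i \<in> finV mem. \<exists>z\<in>P. is_pair mem z i x} \<in> U}"
    and params: "set_fm \<Phi> \<subseteq> starV (finV mem)"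
    and sentence: "fv \<Phi> = {}"
    and r_ge: "r \<ge> rk \<Phi>"
  shows "sat (starV (finV mem)) (starmem mem (finV mem) U) (stareq (finV mem) U) e \<Phi>
     \<longleftrightarrow> Uq (finV mem) U r (\<lambda>is. sat UNIV mem (=) e' (inst \<Phi> is))"
proof -
  let ?I = "finV mem" and ?e0 = "\<lambda>_. star_const undefined"
  have "sat (starV ?I) (starmem mem ?I U) (stareq ?I U) e \<Phi> =
      sat (starV ?I) (starmem mem ?I U) (stareq ?I U) ?e0 \<Phi>"
    by (rule sat_cong_fv) (simp add: sentence)
  also have "\<dots> = Uq ?I U r (\<lambda>is. sat UNIV mem (=) (\<lambda>m. app (?e0 m) is) (inst \<Phi> is))"
    using fst_le_rk r_ge by (intro los[OF ultra]) (force simp: star_const_def)+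
  also have "\<dots> = Uq ?I U r (\<lambda>is. sat UNIV mem (=) e' (inst \<Phi> is))"
    by (rule arg_cong[where f = "Uq ?I U r"], rule ext, rule sat_cong_fv)
      (simp add: inst_def fv_map_fm sentence)
  finally show ?thesis .
qed

end
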